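(* If a circuit $f:a\to b$ is safe, then every polynomial in the tuple $[\![f]\!]$ has all exponents in $\{0,1\}$, i.e. contains no monomial in which some variable appears with exponent at least $2$.
   Context: A circuit is a morphism of the free symmetric strict monoidal category whose objects are natural numbers (tensor = addition) generated by $\mathsf{discard}:1\to 0$, $\mathsf{copy}:1\to 2$, $\mathsf{zero}:0\to1$, $\mathsf{add}:2\to1$, $\mathsf{one}:0\to 1$, $\mathsf{and}:2\to 1$. $[\![\cdot]\!]$ assigns to each circuit $f:a\to b$ a $b$-tuple of polynomials in $\mathbb{Z}_2[x_1,\dots,x_a]$ (genuine polynomials, $x^2\neq x$), compositionally: composition is substitution, tensor is juxtaposition with variables renumbered, symmetries permute variables, and $\mathsf{discard}\mapsto\langle\rangle$, $\mathsf{copy}\mapsto\langle x_1,x_1\rangle$, $\mathsf{zero}\mapsto\langle0\rangle$, $\mathsf{add}\mapsto\langle x_1+x_2\rangle$, $\mathsf{one}\mapsto\langle1\rangle$, $\mathsf{and}\mapsto\langle x_1x_2\rangle$. View a circuit as a directed graph whose nodes are wires and whose edges go from each input wire of a generator occurrence to each of its output wires. A circuit $c$ is safe if for every occurrence of $\mathsf{and}$ in $c$, there is no input port of $c$ from which both input ports of that $\mathsf{and}$ are reachable by a forward path. *)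

theory Defs
  imports Main "HOL-Library.Poly_Mapping" "HOL-Library.Z2"
begin

type_synonym mpoly = "(nat \<Rightarrow>\<^sub>0 nat) \<Rightarrow>\<^sub>0 bit"

definition Var :: "nat \<Rightarrow> mpoly" where
  "Var i = Poly_Mapping.single (Poly_Mapping.single i 1) 1"

definition cst :: "bit \<Rightarrow> mpoly" where
  "cst c = Poly_Mapping.single 0 c"

definition subst :: "(nat \<Rightarrow> mpoly) \<Rightarrow> mpoly \<Rightarrow> mpoly" where
  "subst q p = sum (\<lambda>mon. cst (Poly_Mapping.lookup p mon) * prod (\<lambda>v. q v ^ Poly_Mapping.lookup mon v) (Poly_Mapping.keys mon)) (Poly_Mapping.keys p)"

datatype gen = Discard | Copy | Zero | Add | One | And

fun gdom :: "gen \<Rightarrow> nat" where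
  "gdom Discard = 1" | "gdom Copy = 1" | "gdom Zero = 0"
| "gdom Add = 2" | "gdom One = 0" | "gdom And = 2"

fun gcod :: "gen \<Rightarrow> nat" where
  "gcod Discard = 0" | "gcod Copy = 2" | "gcod Zero = 1"
| "gcod Add = 1" | "gcod One = 1" | "gcod And = 1"

datatype circ = Gen gen | Id nat | Swap nat nat | Seq circ circ | Par circ circ

fun cdom :: "circ \<Rightarrow> nat" where
  "cdom (Gen g) = gdom g" | "cdom (Id n) = n" | "cdom (Swap m n) = m + n"
| "cdom (Seq f g) = cdom f" | "cdom (Par f g) = cdom f + cdom g"

fun ccod :: "circ \<Rightarrow> nat" where
  "ccod (Gen g) = gcod g" | "ccod (Id n) = n" | "ccod (Swap m n) = n + m"
| "ccod (Seq f g) = ccod g" | "ccod (Par f g) = ccod f + ccod g"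

fun wt :: "circ \<Rightarrow> bool" where
  "wt (Seq f g) = (wt f \<and> wt g \<and> ccod f = cdom g)"
| "wt (Par f g) = (wt f \<and> wt g)"
| "wt _ = True"

fun gsem :: "gen \<Rightarrow> mpoly list" where
  "gsem Discard = []"
| "gsem Copy = [Var 0, Var 0]"
| "gsem Zero = [0]"
| "gsem Add = [Var 0 + Var 1]"
| "gsem One = [1]"
| "gsem And = [Var 0 * Var 1]"

fun sem :: "circ \<Rightarrow> mpoly list" where
  "sem (Gen g) = gsem g"
| "sem (Id n) = map Var [0..<n]"
| "sem (Swap m n) = map Var ([m..<m+n] @ [0..<m])"
| "sem (Seq f g) = map (subst (\<lambda>i. sem f ! i)) (sem g)"
| "sem (Par f g) = sem f @ map (subst (\<lambda>i. Var (i + cdom f))) (sem g)"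

text \<open>Given the wire ids of the inputs of a circuit and a fresh-id counter, returns
  (wire ids of the outputs, edge set, list of input-wire pairs of the and-occurrences,
  next fresh id).\<close>
fun graph :: "circ \<Rightarrow> nat list \<Rightarrow> nat \<Rightarrow>
    nat list \<times> (nat \<times> nat) set \<times> (nat \<times> nat) list \<times> nat" where
  "graph (Gen g) ins k =
     (let outs = [k..<k + gcod g] in
      (outs, set ins \<times> set outs,
       (if g = And then [(ins ! 0, ins ! 1)] else []), k + gcod g))"
| "graph (Id n) ins k = (ins, {}, [], k)"
| "graph (Swap m n) ins k = (drop m ins @ take m ins, {}, [], k)"
| "graph (Seq f g) ins k =
     (case graph f ins k of (o1, e1, a1, k1) \<Rightarrow>
       (case graph g o1 k1 of (o2, e2, a2, k2) \<Rightarrow> (o2, e1 \<union> e2, a1 @ a2, k2)))"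
| "graph (Par f g) ins k =
     (case graph f (take (cdom f) ins) k of (o1, e1, a1, k1) \<Rightarrow>
       (case graph g (drop (cdom f) ins) k1 of (o2, e2, a2, k2) \<Rightarrow>
          (o1 @ o2, e1 \<union> e2, a1 @ a2, k2)))"

definition safe :: "circ \<Rightarrow> bool" where
  "safe c = (case graph c [0..<cdom c] (cdom c) of (outs, E, ands, k) \<Rightarrow>
     (\<forall>(p, q) \<in> set ands. \<not> (\<exists>i < cdom c. (i, p) \<in> E\<^sup>* \<and> (i, q) \<in> E\<^sup>*)))"

end

(* Label every wire of a circuit with the polynomial it carries.  By induction on the circuit,
   each such polynomial is multilinear and mentions only variables x_i of input ports i from
   which the wire is reachable in the wire graph.  Discarding, copying, constants and addition
   clearly preserve this.  An and-gate multiplies the polynomials on its two input wires, and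
   safety says that no input port reaches both, so their variable sets are disjoint and the
   product is again multilinear.  To make the induction go through for subcircuits, whose input
   wires carry arbitrary polynomials, the invariant is stated for the substitution of input
   polynomials Q into the semantics. *)

theory Submission
  imports Defs
begin

(* The Z2 simp rules would turn + and * on bit into xor and conjunction; we reason with the
   ring structure instead. *)
declare mult_bit_eq_and[simp del] add_bit_eq_xor[simp del]

section \<open>Substitution is a ring homomorphism\<close>

definition eval_monomial :: "(nat \<Rightarrow> mpoly) \<Rightarrow> (nat \<Rightarrow>\<^sub>0 nat) \<Rightarrow> mpoly" where
  "eval_monomial Q mon = (\<Prod>v\<in>Poly_Mapping.keys mon. Q v ^ Poly_Mapping.lookup mon v)"

lemma subst_eq_sum_monomials:
  "subst Q p = (\<Sum>mon\<in>Poly_Mapping.keys p. cst (Poly_Mapping.lookup p mon) * eval_monomial Q mon)"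
  by (simp add: subst_def eval_monomial_def)

lemma cst_0 [simp]: "cst 0 = 0"
  by (simp add: cst_def)

lemma cst_1 [simp]: "cst 1 = 1"
  by (simp add: cst_def)

lemma cst_add: "cst (a + b) = cst a + cst b"
  by (simp add: cst_def single_add)

lemma cst_mult: "cst (a * b) = cst a * cst b"
  by (simp add: cst_def mult_single)

lemma subst_0 [simp]: "subst Q 0 = 0"
  by (simp add: subst_def)

lemma subst_add: "subst Q (p + q) = subst Q p + subst Q q"
  unfolding subst_eq_sum_monomials
  by (rule setsum_keys_plus_distrib) (simp_all add: cst_add distrib_right)

lemma subst_sum: "subst Q (sum f A) = (\<Sum>x\<in>A. subst Q (f x))"
  by (induction A rule: infinite_finite_induct) (simp_all add: subst_add)

lemma subst_single: "subst Q (Poly_Mapping.single mon c) = cst c * eval_monomial Q mon"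
  by (cases "c = 0") (simp_all add: subst_eq_sum_monomials)

lemma poly_mapping_sum_single:
  "(p :: 'a \<Rightarrow>\<^sub>0 'b::comm_monoid_add) =
     (\<Sum>a\<in>Poly_Mapping.keys p. Poly_Mapping.single a (Poly_Mapping.lookup p a))"
  by (rule poly_mapping_eqI) (auto simp: lookup_sum lookup_single when_def in_keys_iff)

lemma eval_monomial_superset:
  assumes "finite S" "Poly_Mapping.keys mon \<subseteq> S"
  shows "eval_monomial Q mon = (\<Prod>v\<in>S. Q v ^ Poly_Mapping.lookup mon v)"
  unfolding eval_monomial_def
  by (rule prod.mono_neutral_left) (use assms in \<open>auto simp: in_keys_iff\<close>)

lemma eval_monomial_add: "eval_monomial Q (a + b) = eval_monomial Q a * eval_monomial Q b"
proof -
  let ?S = "Poly_Mapping.keys a \<union> Poly_Mapping.keys b"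
  have "eval_monomial Q (a + b) = (\<Prod>v\<in>?S. Q v ^ Poly_Mapping.lookup (a + b) v)"
    by (rule eval_monomial_superset) (use keys_add[of a b] in auto)
  also have "\<dots> = (\<Prod>v\<in>?S. Q v ^ Poly_Mapping.lookup a v) * (\<Prod>v\<in>?S. Q v ^ Poly_Mapping.lookup b v)"
    by (simp add: lookup_add power_add prod.distrib)
  also have "\<dots> = eval_monomial Q a * eval_monomial Q b"
    by (simp flip: eval_monomial_superset)
  finally show ?thesis .
qed

lemma subst_mult: "subst Q (p * q) = subst Q p * subst Q q"
proof -
  have "p * q = (\<Sum>a\<in>Poly_Mapping.keys p. \<Sum>b\<in>Poly_Mapping.keys q.
      Poly_Mapping.single (a + b) (Poly_Mapping.lookup p a * Poly_Mapping.lookup q b))"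
    by (subst (1 2) poly_mapping_sum_single) (simp add: sum_product mult_single)
  then have "subst Q (p * q) = (\<Sum>a\<in>Poly_Mapping.keys p. \<Sum>b\<in>Poly_Mapping.keys q.
      (cst (Poly_Mapping.lookup p a) * eval_monomial Q a) *
      (cst (Poly_Mapping.lookup q b) * eval_monomial Q b))"
    by (simp add: subst_sum subst_single eval_monomial_add cst_mult ac_simps)
  also have "\<dots> = subst Q p * subst Q q"
    by (simp add: subst_eq_sum_monomials sum_product)
  finally show ?thesis .
qed

lemma subst_Var [simp]: "subst Q (Var i) = Q i"
  by (simp add: Var_def subst_single eval_monomial_def)

lemma subst_cst [simp]: "subst Q (cst c) = cst c"
  by (simp add: cst_def subst_single eval_monomial_def)

lemma subst_1 [simp]: "subst Q 1 = 1"
  using subst_cst[of Q 1] by simp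

lemma subst_power: "subst Q (p ^ n) = subst Q p ^ n"
  by (induction n) (simp_all add: subst_mult)

lemma subst_prod: "subst Q (prod f A) = (\<Prod>x\<in>A. subst Q (f x))"
  by (induction A rule: infinite_finite_induct) (simp_all add: subst_mult)

lemma subst_subst: "subst Q (subst P p) = subst (\<lambda>i. subst Q (P i)) p"
  unfolding subst_def[of P] subst_sum subst_mult subst_prod subst_power subst_cst
  unfolding subst_def ..

lemma single_add_one:
  "Poly_Mapping.single (k + l) (1 :: 'b::semiring_1) = Poly_Mapping.single k 1 * Poly_Mapping.single l 1"
  by (simp add: mult_single)

lemma single_sum_one:
  "finite A \<Longrightarrow> Poly_Mapping.single (sum f A) (1 :: 'b::comm_semiring_1) =
     (\<Prod>x\<in>A. Poly_Mapping.single (f x) 1)"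
  by (induction A rule: finite_induct) (simp_all add: single_add_one)

lemma single_single_power:
  "(Poly_Mapping.single (Poly_Mapping.single v e) 1 :: mpoly) = Var v ^ e"
proof (induction e)
  case (Suc e)
  have "Poly_Mapping.single v (Suc e) = Poly_Mapping.single v 1 + Poly_Mapping.single v e"
    by (simp add: single_add[symmetric])
  then show ?case
    using Suc by (simp add: Var_def single_add_one)
qed simp

lemma eval_monomial_Var: "eval_monomial Var mon = Poly_Mapping.single mon 1"
proof -
  have "Poly_Mapping.single mon (1::bit) =
      Poly_Mapping.single
        (\<Sum>v\<in>Poly_Mapping.keys mon. Poly_Mapping.single v (Poly_Mapping.lookup mon v)) 1"
    by (subst poly_mapping_sum_single) (rule refl)
  also have "\<dots> = eval_monomial Var mon"
    by (simp add: single_sum_one single_single_power eval_monomial_def)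
  finally show ?thesis ..
qed

lemma subst_Var_id [simp]: "subst Var p = p"
proof -
  have "subst Var p = (\<Sum>mon\<in>Poly_Mapping.keys p. Poly_Mapping.single mon (Poly_Mapping.lookup p mon))"
    by (simp add: subst_eq_sum_monomials eval_monomial_Var cst_def mult_single)
  then show ?thesis
    by (simp flip: poly_mapping_sum_single)
qed

section \<open>Multilinear polynomials\<close>

definition multilinear :: "mpoly \<Rightarrow> bool" where
  "multilinear p \<longleftrightarrow> (\<forall>mon\<in>Poly_Mapping.keys p. \<forall>i. Poly_Mapping.lookup mon i \<le> 1)"

definition vars :: "mpoly \<Rightarrow> nat set" where
  "vars p = (\<Union>mon\<in>Poly_Mapping.keys p. Poly_Mapping.keys mon)"

lemma multilinear_0 [simp]: "multilinear 0"
  and vars_0 [simp]: "vars 0 = {}"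
  by (simp_all add: multilinear_def vars_def)

lemma multilinear_1 [simp]: "multilinear 1"
  and vars_1 [simp]: "vars 1 = {}"
  by (simp_all add: multilinear_def vars_def)

lemma multilinear_Var [simp]: "multilinear (Var i)"
  and vars_Var [simp]: "vars (Var i) = {i}"
  by (simp_all add: multilinear_def vars_def Var_def lookup_single when_def)

lemma multilinear_add: "multilinear p \<Longrightarrow> multilinear q \<Longrightarrow> multilinear (p + q)"
  unfolding multilinear_def using keys_add[of p q] by blast

lemma vars_add: "vars (p + q) \<subseteq> vars p \<union> vars q"
  unfolding vars_def using keys_add[of p q] by blast

lemma keys_add_nat:
  "Poly_Mapping.keys (a + b :: 'a \<Rightarrow>\<^sub>0 nat) = Poly_Mapping.keys a \<union> Poly_Mapping.keys b"
  by (auto simp: in_keys_iff lookup_add)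

lemma vars_mult: "vars (p * q) \<subseteq> vars p \<union> vars q"
  unfolding vars_def using keys_mult[of p q] by (fastforce simp: keys_add_nat)

lemma multilinear_mult:
  assumes "multilinear p" "multilinear q" "vars p \<inter> vars q = {}"
  shows "multilinear (p * q)"
  unfolding multilinear_def
proof (intro ballI allI)
  fix mon i
  assume "mon \<in> Poly_Mapping.keys (p * q)"
  then obtain a b where mon: "mon = a + b" "a \<in> Poly_Mapping.keys p" "b \<in> Poly_Mapping.keys q"
    using keys_mult[of p q] by blast
  have "i \<notin> vars p \<or> i \<notin> vars q"
    using assms(3) by blast
  then have "Poly_Mapping.lookup a i = 0 \<or> Poly_Mapping.lookup b i = 0"
    using mon by (auto simp: vars_def in_keys_iff)
  moreover have "Poly_Mapping.lookup a i \<le> 1" "Poly_Mapping.lookup b i \<le> 1"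
    using assms(1,2) mon by (auto simp: multilinear_def)
  ultimately show "Poly_Mapping.lookup mon i \<le> 1"
    using mon by (auto simp: lookup_add)
qed

section \<open>The reachability invariant\<close>

lemma length_sem: "wt c \<Longrightarrow> length (sem c) = ccod c"
proof (induction c)
  case (Gen g)
  then show ?case by (cases g) simp_all
qed simp_all

lemma length_graph_outputs:
  "wt c \<Longrightarrow> length ins = cdom c \<Longrightarrow> length (fst (graph c ins k)) = ccod c"
proof (induction c arbitrary: ins k)
  case (Seq f g)
  obtain o1 e1 a1 k1 where f: "graph f ins k = (o1, e1, a1, k1)"
    by (cases "graph f ins k")
  have "length o1 = cdom g"
    using Seq.IH(1)[of ins k] Seq.prems f by simp
  then show ?case
    using Seq.IH(2)[of o1 k1] Seq.prems f by (auto split: prod.split)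
next
  case (Par f g)
  obtain o1 e1 a1 k1 where f: "graph f (take (cdom f) ins) k = (o1, e1, a1, k1)"
    by (cases "graph f (take (cdom f) ins) k")
  have "length o1 = ccod f"
    using Par.IH(1)[of "take (cdom f) ins" k] Par.prems f by simp
  then show ?case
    using Par.IH(2)[of "drop (cdom f) ins" k1] Par.prems f by (auto split: prod.split)
qed (simp_all add: Let_def)

definition ancestors :: "(nat \<times> nat) set \<Rightarrow> nat \<Rightarrow> nat \<Rightarrow> nat set" where
  "ancestors R N w = {i. i < N \<and> (i, w) \<in> R\<^sup>*}"

lemma ancestors_mono_edge: "(v, w) \<in> R \<Longrightarrow> ancestors R N v \<subseteq> ancestors R N w"
  unfolding ancestors_def by (auto intro: rtrancl_into_rtrancl)

definition respects_ancestry :: "(nat \<times> nat) set \<Rightarrow> nat \<Rightarrow> (nat \<Rightarrow> mpoly) \<Rightarrow> nat list \<Rightarrow> bool" where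
  "respects_ancestry R N Q ws \<longleftrightarrow>
     (\<forall>t < length ws. multilinear (Q t) \<and> vars (Q t) \<subseteq> ancestors R N (ws ! t))"

lemma respects_ancestry_cong:
  "respects_ancestry R N Q ws \<Longrightarrow> (\<And>t. t < length ws \<Longrightarrow> P t = Q t) \<Longrightarrow> respects_ancestry R N P ws"
  by (simp add: respects_ancestry_def)

lemma respects_ancestry_append:
  "respects_ancestry R N Q (xs @ ys) \<longleftrightarrow>
     respects_ancestry R N Q xs \<and> respects_ancestry R N (\<lambda>i. Q (length xs + i)) ys"
  (is "?whole \<longleftrightarrow> ?parts")
proof
  assume ?whole
  then have "multilinear (Q t) \<and> vars (Q t) \<subseteq> ancestors R N ((xs @ ys) ! t)"
    if "t < length xs + length ys" for t
    using that by (simp add: respects_ancestry_def)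
  then show ?parts
    unfolding respects_ancestry_def
    by (metis nth_append_left nth_append_length_plus add_less_cancel_left trans_less_add1)
next
  assume parts: ?parts
  have "multilinear (Q t) \<and> vars (Q t) \<subseteq> ancestors R N ((xs @ ys) ! t)"
    if "t < length xs + length ys" for t
  proof (cases "t < length xs")
    case True
    then show ?thesis
      using parts by (simp add: respects_ancestry_def nth_append_left)
  next
    case False
    then obtain i where "t = length xs + i"
      by (metis le_add_diff_inverse not_less)
    then show ?thesis
      using parts that by (simp add: respects_ancestry_def)
  qed
  then show ?whole
    by (simp add: respects_ancestry_def)
qed

text \<open>\<open>R\<close> and \<open>A\<close> over-approximate the edges and the and-gate inputs of an enclosing
  circuit, so that the property is inherited by subcircuits.\<close>
definition propagates_ancestry :: "circ \<Rightarrow> (nat \<times> nat) set \<Rightarrow> (nat \<times> nat) set \<Rightarrow> nat \<Rightarrow> bool" where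
  "propagates_ancestry c R A N \<longleftrightarrow>
     (\<forall>ins k outs E ands k' Q. length ins = cdom c \<longrightarrow> graph c ins k = (outs, E, ands, k') \<longrightarrow>
        E \<subseteq> R \<longrightarrow> set ands \<subseteq> A \<longrightarrow> respects_ancestry R N Q ins \<longrightarrow>
        respects_ancestry R N (\<lambda>j. subst Q (sem c ! j)) outs)"

lemma propagates_ancestryI:
  assumes "\<And>ins k outs E ands k' Q. length ins = cdom c \<Longrightarrow> graph c ins k = (outs, E, ands, k') \<Longrightarrow>
      E \<subseteq> R \<Longrightarrow> set ands \<subseteq> A \<Longrightarrow> respects_ancestry R N Q ins \<Longrightarrow>
      respects_ancestry R N (\<lambda>j. subst Q (sem c ! j)) outs"
  shows "propagates_ancestry c R A N"
  using assms unfolding propagates_ancestry_def by blast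

lemma propagates_ancestryD:
  assumes "propagates_ancestry c R A N" "length ins = cdom c" "graph c ins k = (outs, E, ands, k')"
    "E \<subseteq> R" "set ands \<subseteq> A" "respects_ancestry R N Q ins"
  shows "respects_ancestry R N (\<lambda>j. subst Q (sem c ! j)) outs"
  using assms unfolding propagates_ancestry_def by blast

lemma multilinear_subst_gsem:
  assumes "j < gcod g"
    and inputs: "\<And>t. t < gdom g \<Longrightarrow> multilinear (Q t) \<and> vars (Q t) \<subseteq> S"
    and "g = And \<Longrightarrow> vars (Q 0) \<inter> vars (Q 1) = {}"
  shows "multilinear (subst Q (gsem g ! j)) \<and> vars (subst Q (gsem g ! j)) \<subseteq> S"
proof (cases g)
  case Copy
  then show ?thesis
    using assms(1) inputs[of 0] by (auto simp: less_2_cases_iff)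
next
  case Add
  with inputs[of 0] inputs[of 1] have "multilinear (Q 0 + Q 1) \<and> vars (Q 0 + Q 1) \<subseteq> S"
    using vars_add[of "Q 0" "Q 1"] by (auto intro: multilinear_add)
  with Add assms(1) show ?thesis
    by (simp add: subst_add)
next
  case And
  with inputs[of 0] inputs[of 1] assms(3) have "multilinear (Q 0 * Q 1) \<and> vars (Q 0 * Q 1) \<subseteq> S"
    using vars_mult[of "Q 0" "Q 1"] by (auto intro: multilinear_mult)
  with And assms(1) show ?thesis
    by (simp add: subst_mult)
qed (use assms(1) in simp_all)

lemma propagates_ancestry_Gen:
  assumes disjoint: "\<forall>(v, w)\<in>A. ancestors R N v \<inter> ancestors R N w = {}"
  shows "propagates_ancestry (Gen g) R A N"
proof (rule propagates_ancestryI)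
  fix ins k outs E ands k' and Q :: "nat \<Rightarrow> mpoly"
  assume len: "length ins = cdom (Gen g)" and gr: "graph (Gen g) ins k = (outs, E, ands, k')"
    and "E \<subseteq> R" "set ands \<subseteq> A" and Q: "respects_ancestry R N Q ins"
  have outs: "outs = [k..<k + gcod g]" and edges: "set ins \<times> set outs \<subseteq> R"
    and ands: "ands = (if g = And then [(ins ! 0, ins ! 1)] else [])"
    using gr \<open>E \<subseteq> R\<close> by (auto simp: Let_def)
  have inputs: "multilinear (Q t) \<and> vars (Q t) \<subseteq> ancestors R N (ins ! t)" if "t < gdom g" for t
    using Q that len by (simp add: respects_ancestry_def)
  have and_inputs_disjoint: "vars (Q 0) \<inter> vars (Q 1) = {}" if "g = And"
  proof -
    have "(ins ! 0, ins ! 1) \<in> A"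
      using ands \<open>set ands \<subseteq> A\<close> that by simp
    then have "ancestors R N (ins ! 0) \<inter> ancestors R N (ins ! 1) = {}"
      using disjoint by blast
    then show ?thesis
      using inputs[of 0] inputs[of 1] that by auto
  qed
  have upstream: "ancestors R N (ins ! t) \<subseteq> ancestors R N (outs ! j)"
    if "t < gdom g" "j < length outs" for t j
    by (rule ancestors_mono_edge) (use edges nth_mem[of t ins] nth_mem[of j outs] that len in auto)
  show "respects_ancestry R N (\<lambda>j. subst Q (sem (Gen g) ! j)) outs"
    unfolding respects_ancestry_def
  proof (intro allI impI)
    fix j
    assume "j < length outs"
    then show "multilinear (subst Q (sem (Gen g) ! j)) \<and>
        vars (subst Q (sem (Gen g) ! j)) \<subseteq> ancestors R N (outs ! j)"
      using and_inputs_disjoint upstream inputs outs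
      unfolding sem.simps by (intro multilinear_subst_gsem) fastforce+
  qed
qed

lemma propagates_ancestry_Id: "propagates_ancestry (Id n) R A N"
proof (rule propagates_ancestryI)
  fix ins k outs E ands k' Q
  assume len: "length ins = cdom (Id n)" and gr: "graph (Id n) ins k = (outs, E, ands, k')"
    and Q: "respects_ancestry R N Q ins"
  have "outs = ins"
    using gr by simp
  show "respects_ancestry R N (\<lambda>j. subst Q (sem (Id n) ! j)) outs"
    unfolding \<open>outs = ins\<close> using Q by (rule respects_ancestry_cong) (use len in simp)
qed

lemma propagates_ancestry_Swap: "propagates_ancestry (Swap m n) R A N"
proof (rule propagates_ancestryI)
  fix ins k outs E ands k' Q
  assume len: "length ins = cdom (Swap m n)" and gr: "graph (Swap m n) ins k = (outs, E, ands, k')"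
    and Q: "respects_ancestry R N Q ins"
  have outs: "outs = drop m ins @ take m ins"
    using gr by simp
  from Q have taken: "respects_ancestry R N Q (take m ins)"
    and dropped: "respects_ancestry R N (\<lambda>i. Q (m + i)) (drop m ins)"
    using respects_ancestry_append[of R N Q "take m ins" "drop m ins"] len by simp_all
  show "respects_ancestry R N (\<lambda>j. subst Q (sem (Swap m n) ! j)) outs"
    unfolding outs respects_ancestry_append
  proof
    show "respects_ancestry R N (\<lambda>j. subst Q (sem (Swap m n) ! j)) (drop m ins)"
      using dropped by (rule respects_ancestry_cong) (use len in \<open>simp add: nth_append\<close>)
    show "respects_ancestry R N
        (\<lambda>i. subst Q (sem (Swap m n) ! (length (drop m ins) + i))) (take m ins)"
      using taken by (rule respects_ancestry_cong) (use len in \<open>simp add: nth_append\<close>)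
  qed
qed

lemma propagates_ancestry_Seq:
  assumes "wt (Seq f g)" "propagates_ancestry f R A N" "propagates_ancestry g R A N"
  shows "propagates_ancestry (Seq f g) R A N"
proof (rule propagates_ancestryI)
  fix ins k outs E ands k' Q
  assume len: "length ins = cdom (Seq f g)" and gr: "graph (Seq f g) ins k = (outs, E, ands, k')"
    and "E \<subseteq> R" "set ands \<subseteq> A" and Q: "respects_ancestry R N Q ins"
  obtain o1 e1 a1 k1 where f: "graph f ins k = (o1, e1, a1, k1)"
    by (cases "graph f ins k")
  obtain e2 a2 where g: "graph g o1 k1 = (outs, e2, a2, k')"
    and "e1 \<subseteq> R" "e2 \<subseteq> R" "set a1 \<subseteq> A" "set a2 \<subseteq> A"
    using gr f \<open>E \<subseteq> R\<close> \<open>set ands \<subseteq> A\<close> by (auto split: prod.splits)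
  let ?P = "\<lambda>i. subst Q (sem f ! i)"
  have "respects_ancestry R N ?P o1"
    using propagates_ancestryD[OF assms(2) _ f] len Q \<open>e1 \<subseteq> R\<close> \<open>set a1 \<subseteq> A\<close> by simp
  moreover have "length o1 = cdom g"
    using length_graph_outputs[of f ins k] assms(1) len f by simp
  ultimately have "respects_ancestry R N (\<lambda>j. subst ?P (sem g ! j)) outs"
    using propagates_ancestryD[OF assms(3) _ g] \<open>e2 \<subseteq> R\<close> \<open>set a2 \<subseteq> A\<close> by simp
  moreover have "length outs = length (sem g)"
    using length_graph_outputs[of g o1 k1] length_sem[of g] assms(1) \<open>length o1 = cdom g\<close> g by simp
  ultimately show "respects_ancestry R N (\<lambda>j. subst Q (sem (Seq f g) ! j)) outs"
    by (elim respects_ancestry_cong) (simp add: subst_subst)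
qed

lemma propagates_ancestry_Par:
  assumes "wt (Par f g)" "propagates_ancestry f R A N" "propagates_ancestry g R A N"
  shows "propagates_ancestry (Par f g) R A N"
proof (rule propagates_ancestryI)
  fix ins k outs E ands k' Q
  assume len: "length ins = cdom (Par f g)" and gr: "graph (Par f g) ins k = (outs, E, ands, k')"
    and "E \<subseteq> R" "set ands \<subseteq> A" and Q: "respects_ancestry R N Q ins"
  obtain o1 e1 a1 k1 where f: "graph f (take (cdom f) ins) k = (o1, e1, a1, k1)"
    by (cases "graph f (take (cdom f) ins) k")
  obtain o2 e2 a2 where g: "graph g (drop (cdom f) ins) k1 = (o2, e2, a2, k')" and outs: "outs = o1 @ o2"
    and "e1 \<subseteq> R" "e2 \<subseteq> R" "set a1 \<subseteq> A" "set a2 \<subseteq> A"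
    using gr f \<open>E \<subseteq> R\<close> \<open>set ands \<subseteq> A\<close> by (auto split: prod.splits)
  from Q have "respects_ancestry R N Q (take (cdom f) ins)"
    and "respects_ancestry R N (\<lambda>i. Q (cdom f + i)) (drop (cdom f) ins)"
    using respects_ancestry_append[of R N Q "take (cdom f) ins" "drop (cdom f) ins"] len by simp_all
  then have left: "respects_ancestry R N (\<lambda>j. subst Q (sem f ! j)) o1"
    and right: "respects_ancestry R N (\<lambda>j. subst (\<lambda>i. Q (cdom f + i)) (sem g ! j)) o2"
    using propagates_ancestryD[OF assms(2) _ f] propagates_ancestryD[OF assms(3) _ g] len
      \<open>e1 \<subseteq> R\<close> \<open>e2 \<subseteq> R\<close> \<open>set a1 \<subseteq> A\<close> \<open>set a2 \<subseteq> A\<close> by simp_all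
  have "length o1 = length (sem f)" "length o2 = length (sem g)"
    using length_graph_outputs[of f "take (cdom f) ins" k]
      length_graph_outputs[of g "drop (cdom f) ins" k1]
      length_sem[of f] length_sem[of g] assms(1) len f g by simp_all
  with left right show "respects_ancestry R N (\<lambda>j. subst Q (sem (Par f g) ! j)) outs"
    unfolding outs respects_ancestry_append
    by (auto elim!: respects_ancestry_cong simp: nth_append subst_subst add.commute)
qed

lemma wt_propagates_ancestry:
  assumes "wt c" and "\<forall>(v, w)\<in>A. ancestors R N v \<inter> ancestors R N w = {}"
  shows "propagates_ancestry c R A N"
  using assms(1)
proof (induction c)
  case (Gen g)
  show ?case using assms(2) by (rule propagates_ancestry_Gen)
qed (simp_all add: propagates_ancestry_Id propagates_ancestry_Swap propagates_ancestry_Seq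
      propagates_ancestry_Par)

theorem mainTheorem7:
  fixes f :: circ
  assumes "wt f" and "safe f"
  shows "\<forall>p \<in> set (sem f). \<forall>m \<in> Poly_Mapping.keys p. \<forall>i. Poly_Mapping.lookup m i \<le> 1"
proof -
  let ?N = "cdom f"
  obtain outs E ands k' where gr: "graph f [0..<?N] ?N = (outs, E, ands, k')"
    by (cases "graph f [0..<?N] ?N")
  have "\<forall>(v, w)\<in>set ands. ancestors E ?N v \<inter> ancestors E ?N w = {}"
    using assms(2) gr by (auto simp: safe_def ancestors_def)
  with assms(1) have "propagates_ancestry f E (set ands) ?N"
    by (rule wt_propagates_ancestry)
  then have "respects_ancestry E ?N (\<lambda>j. subst Var (sem f ! j)) outs"
    by (rule propagates_ancestryD[OF _ _ gr order_refl order_refl])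
      (simp_all add: respects_ancestry_def ancestors_def)
  moreover have "length outs = length (sem f)"
    using length_graph_outputs[of f "[0..<?N]" ?N] length_sem[of f] assms(1) gr by simp
  ultimately have "\<forall>p \<in> set (sem f). multilinear p"
    by (auto simp: respects_ancestry_def in_set_conv_nth)
  then show ?thesis
    by (simp add: multilinear_def)
qed

end
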